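(* Let $\Sigma\subseteq\mathbb{C}$ be a nonempty compact set, $L$ a bounded band operator on $\ell^2(\mathbb{Z})$ with $LS=SL$, and $\gamma\in\mathbb{Z}$. Let $b,c\in\Sigma^{\mathbb{N}}$ and let $H(b)^+$, $H(c)^+$ be the corresponding half-axis generalized Schrödinger operators, with band-width $w$. If $N\in\mathbb{N}$ and \[ b|_{1..w+N-1}=c|_{1..w+N-1}\qquad\text{and}\qquad\mathcal{W}_N(b)\subseteq\mathcal{W}_N(c), \] then $\nu_N(H(b)^+)\ge\nu_N(H(c)^+)$.
   Context: $\mathbb{N}=\{1,2,\dots\}$, $a..b:=\{n\in\mathbb{Z}:a\le n\le b\}$, $(Sx)_n=x_{n-1}$, $(M_ux)_n=u_nx_n$. For $u\in\Sigma^{\mathbb{N}}$, $H(u)^+$ is the operator on $\ell^2(\mathbb{N})$ with matrix $(H_{ij})_{i,j\in\mathbb{N}}$, where $(H_{ij})_{i,j\in\mathbb{Z}}$ is the matrix of $L+S^\gamma M_{\tilde u}$ for any extension $\tilde u\in\Sigma^{\mathbb{Z}}$ of $u$ (independent of the extension). The band-width $w$ is such that matrix entries vanish for $|i-j|>w$. $\mathcal{W}_N(u)$ is the set of all length-$N$ subwords $(u(k),\dots,u(k+N-1))$, $k\in\mathbb{N}$. $\nu_N(T):=\inf\{\|Tx\|:\|x\|=1,\ \operatorname{diam}(\operatorname{supp}x)<N\}$. *)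

theory Defs
  imports "HOL-Analysis.Analysis"
begin

text \<open>Sequences on \<open>\<nat> = {1,2,...}\<close>: functions \<open>nat \<Rightarrow> complex\<close> vanishing at 0.\<close>

definition in_l2Z :: "(int \<Rightarrow> complex) \<Rightarrow> bool" where
  "in_l2Z x \<longleftrightarrow> (\<lambda>i. (cmod (x i))^2) summable_on UNIV"

definition l2Z_norm :: "(int \<Rightarrow> complex) \<Rightarrow> real" where
  "l2Z_norm x = sqrt (infsum (\<lambda>i. (cmod (x i))^2) UNIV)"

definition in_l2N :: "(nat \<Rightarrow> complex) \<Rightarrow> bool" where
  "in_l2N x \<longleftrightarrow> x 0 = 0 \<and> (\<lambda>i. (cmod (x i))^2) summable_on {1..}"

definition l2N_norm :: "(nat \<Rightarrow> complex) \<Rightarrow> real" where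
  "l2N_norm x = sqrt (infsum (\<lambda>i. (cmod (x i))^2) {1..})"

definition shiftZ :: "(int \<Rightarrow> complex) \<Rightarrow> (int \<Rightarrow> complex)" where
  "shiftZ x = (\<lambda>n. x (n - 1))"

definition Lmat :: "((int \<Rightarrow> complex) \<Rightarrow> (int \<Rightarrow> complex)) \<Rightarrow> int \<Rightarrow> int \<Rightarrow> complex" where
  "Lmat L i j = L (\<lambda>k. if k = j then 1 else 0) i"

definition bounded_op_l2Z :: "((int \<Rightarrow> complex) \<Rightarrow> (int \<Rightarrow> complex)) \<Rightarrow> bool" where
  "bounded_op_l2Z L \<longleftrightarrow>
     (\<forall>x y. in_l2Z x \<longrightarrow> in_l2Z y \<longrightarrow> L (\<lambda>n. x n + y n) = (\<lambda>n. L x n + L y n)) \<and>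
     (\<forall>x a. in_l2Z x \<longrightarrow> L (\<lambda>n. a * x n) = (\<lambda>n. a * L x n)) \<and>
     (\<exists>C. \<forall>x. in_l2Z x \<longrightarrow> in_l2Z (L x) \<and> l2Z_norm (L x) \<le> C * l2Z_norm x)"

definition band_op :: "((int \<Rightarrow> complex) \<Rightarrow> (int \<Rightarrow> complex)) \<Rightarrow> bool" where
  "band_op L \<longleftrightarrow> (\<exists>w0::nat. \<forall>i j. int w0 < \<bar>i - j\<bar> \<longrightarrow> Lmat L i j = 0)"

text \<open>Entries of the matrix of \<open>L + S^\<gamma> M_u\<close> on \<open>\<int>\<close>:
  \<open>(S^\<gamma> M_u x)_i = u_{i-\<gamma>} x_{i-\<gamma>}\<close>.\<close>
definition HmatZ :: "((int \<Rightarrow> complex) \<Rightarrow> (int \<Rightarrow> complex)) \<Rightarrow> int \<Rightarrow> (int \<Rightarrow> complex) \<Rightarrow> int \<Rightarrow> int \<Rightarrow> complex" where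
  "HmatZ L \<gamma> u i j = Lmat L i j + (if i - j = \<gamma> then u j else 0)"

text \<open>Half-axis matrix \<open>(H_{ij})_{i,j\<in>\<nat>}\<close>; for \<open>j \<in> \<nat>\<close> the value of any extension at
  \<open>j\<close> is \<open>u j\<close>, hence the independence of the extension.\<close>
definition Hmat_plus :: "((int \<Rightarrow> complex) \<Rightarrow> (int \<Rightarrow> complex)) \<Rightarrow> int \<Rightarrow> (nat \<Rightarrow> complex) \<Rightarrow> nat \<Rightarrow> nat \<Rightarrow> complex" where
  "Hmat_plus L \<gamma> u i j = Lmat L (int i) (int j) + (if int i - int j = \<gamma> then u j else 0)"

definition Hplus :: "((int \<Rightarrow> complex) \<Rightarrow> (int \<Rightarrow> complex)) \<Rightarrow> int \<Rightarrow> (nat \<Rightarrow> complex) \<Rightarrow> (nat \<Rightarrow> complex) \<Rightarrow> (nat \<Rightarrow> complex)" where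
  "Hplus L \<gamma> u x = (\<lambda>i. if 1 \<le> i then infsum (\<lambda>j. Hmat_plus L \<gamma> u i j * x j) {1..} else 0)"

definition is_bandwidth :: "((int \<Rightarrow> complex) \<Rightarrow> (int \<Rightarrow> complex)) \<Rightarrow> int \<Rightarrow> complex set \<Rightarrow> (nat \<Rightarrow> complex) \<Rightarrow> nat \<Rightarrow> bool" where
  "is_bandwidth L \<gamma> \<Sigma> u w \<longleftrightarrow>
     (\<forall>ut. (\<forall>n. ut n \<in> \<Sigma>) \<longrightarrow> (\<forall>n::nat. 1 \<le> n \<longrightarrow> ut (int n) = u n) \<longrightarrow>
        (\<forall>i j. int w < \<bar>i - j\<bar> \<longrightarrow> HmatZ L \<gamma> ut i j = 0))"

text \<open>\<open>diam(supp x) < N\<close> (the diameter of an infinite/unbounded support is infinite).\<close>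
definition supp_diam_lt :: "(nat \<Rightarrow> complex) \<Rightarrow> nat \<Rightarrow> bool" where
  "supp_diam_lt x N \<longleftrightarrow>
     (let S = {i. x i \<noteq> 0} in finite S \<and> (S \<noteq> {} \<longrightarrow> Max S - Min S < N))"

definition nu :: "nat \<Rightarrow> ((nat \<Rightarrow> complex) \<Rightarrow> (nat \<Rightarrow> complex)) \<Rightarrow> real" where
  "nu N T = Inf ((\<lambda>x. l2N_norm (T x)) ` {x. in_l2N x \<and> l2N_norm x = 1 \<and> supp_diam_lt x N})"

definition subwords :: "nat \<Rightarrow> (nat \<Rightarrow> 'a) \<Rightarrow> 'a list set" where
  "subwords N u = {map (\<lambda>i. u (k + i)) [0..<N] | k. 1 \<le> k}"

end

(*
  A test vector x for H(b)^+ is supported in a window {m..<m+N}. The columns of H(u)^+ in that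
  window involve u only on the window, and L is Toeplitz since it commutes with S. If m <= w,
  b and c agree on the window and x itself is a test vector for c. Otherwise the word of b on the
  window occurs in c at some k, and the translate y of x to {k..<k+N} satisfies
  (L + S^gamma M_c) y = S^(k-m) (L + S^gamma M_b) x on the whole line. Restricting to the half axis
  loses no more for y than for x: for k <= m the image is moved towards the boundary, and for
  k > m > w the image of x already vanishes on rows <= 0 by the band structure.
*)
theory Submission
  imports Defs
begin

lemma infsum_eq_sum_if_zero_outside:
  fixes f :: "'a \<Rightarrow> 'b::{comm_monoid_add, t2_space}"
  assumes "finite A" "A \<subseteq> B" "\<And>j. j \<in> B \<Longrightarrow> j \<notin> A \<Longrightarrow> f j = 0"
  shows "infsum f B = sum f A"
proof -
  have "infsum f B = infsum f A"
    by (rule infsum_cong_neutral) (use assms in auto)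
  also have "\<dots> = sum f A"
    using assms(1) by (rule infsum_finite)
  finally show ?thesis .
qed

lemma l2N_norm_eq_sum:
  assumes "finite A" "A \<subseteq> {1..}" "\<And>j. j \<notin> A \<Longrightarrow> x j = 0"
  shows "l2N_norm x = sqrt (\<Sum>j\<in>A. (cmod (x j))\<^sup>2)"
  unfolding l2N_norm_def
  by (subst infsum_eq_sum_if_zero_outside[OF assms(1,2)]) (use assms(3) in auto)

lemma in_l2N_if_finite_support:
  assumes "finite A" "x 0 = 0" "\<And>j. j \<notin> A \<Longrightarrow> x j = 0"
  shows "in_l2N x"
  unfolding in_l2N_def
proof (intro conjI assms(2) finite_nonzero_values_imp_summable_on)
  show "finite {j \<in> {1..}. (cmod (x j))\<^sup>2 \<noteq> 0}"
    by (rule finite_subset[OF _ assms(1)]) (use assms(3) in auto)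
qed

definition test_vectors :: "nat \<Rightarrow> (nat \<Rightarrow> complex) set" where
  "test_vectors N = {x. in_l2N x \<and> l2N_norm x = 1 \<and> supp_diam_lt x N}"

lemma nu_eq_Inf_test_vectors: "nu N T = Inf ((\<lambda>x. l2N_norm (T x)) ` test_vectors N)"
  unfolding nu_def test_vectors_def ..

definition half_axis :: "(int \<Rightarrow> 'a::zero) \<Rightarrow> nat \<Rightarrow> 'a" where
  "half_axis g = (\<lambda>i. if 1 \<le> i then g (int i) else 0)"

lemma l2N_norm_half_axis:
  "l2N_norm (half_axis g) = sqrt (infsum (\<lambda>i. (cmod (g i))\<^sup>2) {1..})"
proof -
  have "infsum (\<lambda>i. (cmod (half_axis g i))\<^sup>2) {1..} = infsum (\<lambda>i. (cmod (g (int i)))\<^sup>2) {1..}"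
    by (rule infsum_cong) (simp add: half_axis_def)
  also have "\<dots> = infsum (\<lambda>i. (cmod (g i))\<^sup>2) {1..}"
  proof (rule infsum_reindex_bij_betw)
    show "bij_betw int {1..} {1..}"
    proof (rule bij_betw_imageI)
      show "int ` {1..} = {1..}"
      proof (intro subset_antisym subsetI)
        fix i :: int
        assume "i \<in> {1..}"
        then show "i \<in> int ` {1..}"
          by (intro image_eqI[of _ _ "nat i"]) auto
      qed auto
    qed simp
  qed
  finally show ?thesis
    unfolding l2N_norm_def by simp
qed

lemma l2N_norm_half_axis_translate_le:
  fixes g :: "int \<Rightarrow> complex"
  assumes "finite {i. g i \<noteq> 0}" and "0 \<le> d \<or> (\<forall>i\<le>0. g i = 0)"
  shows "l2N_norm (half_axis (\<lambda>i. g (i + d))) \<le> l2N_norm (half_axis g)"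
proof -
  let ?f = "\<lambda>i. (cmod (g i))\<^sup>2"
  have summable: "?f summable_on A" for A
    by (rule finite_nonzero_values_imp_summable_on, rule finite_subset[OF _ assms(1)]) auto
  have "infsum (\<lambda>i. ?f (i + d)) {1..} = infsum ?f {1 + d..}"
  proof (rule infsum_reindex_bij_betw)
    show "bij_betw (\<lambda>i. i + d) {1..} {1 + d..}"
    proof (rule bij_betw_imageI)
      show "(\<lambda>i. i + d) ` {1..} = {1 + d..}"
        using image_add_atLeast[of d 1] by (simp add: add.commute)
    qed simp
  qed
  also have "\<dots> \<le> infsum ?f {1..}"
  proof (cases "0 \<le> d")
    case True
    then show ?thesis
      by (intro infsum_mono2 summable) auto
  next
    case False
    with assms(2) show ?thesis
      by (intro eq_refl infsum_cong_neutral) auto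
  qed
  finally show ?thesis
    unfolding l2N_norm_half_axis by (rule real_sqrt_le_mono)
qed

lemma in_l2Z_unit_vector: "in_l2Z (\<lambda>k. if k = j then 1 else 0)"
  unfolding in_l2Z_def
  by (rule finite_nonzero_values_imp_summable_on) (rule finite_subset[of _ "{j}"], auto)

lemma Lmat_translate:
  assumes "\<forall>x. in_l2Z x \<longrightarrow> L (shiftZ x) = shiftZ (L x)"
  shows "Lmat L (i + d) (j + d) = Lmat L i j"
proof -
  have step: "Lmat L (i + 1) (j + 1) = Lmat L i j" for i j
  proof -
    define e where "e = (\<lambda>k::int. if k = j then (1::complex) else 0)"
    have e_shift: "(\<lambda>k. if k = j + 1 then 1 else 0) = shiftZ e"
      unfolding shiftZ_def e_def by auto
    have "L (shiftZ e) = shiftZ (L e)"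
      using assms in_l2Z_unit_vector[of j] unfolding e_def by blast
    then have "L (shiftZ e) (i + 1) = L e i"
      by (simp add: shiftZ_def)
    then show ?thesis
      unfolding Lmat_def e_shift by (simp add: e_def)
  qed
  show ?thesis
  proof (induction d rule: int_induct[where k = 0])
    case (step1 d)
    then show ?case using step[of "i + d" "j + d"] by (simp add: add.assoc)
  next
    case (step2 d)
    then show ?case using step[of "i + (d - 1)" "j + (d - 1)"] by (simp add: algebra_simps)
  qed simp
qed

lemma HmatZ_translate:
  assumes "\<forall>x. in_l2Z x \<longrightarrow> L (shiftZ x) = shiftZ (L x)"
  shows "HmatZ L \<gamma> u (i + d) (j + d) = HmatZ L \<gamma> (\<lambda>n. u (n + d)) i j"
  unfolding HmatZ_def using Lmat_translate[OF assms] by simp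

text \<open>Column \<open>j \<ge> 1\<close> of \<open>HmatZ\<close> only involves \<open>u j\<close>, so the band-width assumption, which
  quantifies over extensions with values in \<open>\<Sigma>\<close>, applies to any sequence agreeing with \<open>u\<close> there.\<close>
lemma HmatZ_band:
  assumes "is_bandwidth L \<gamma> \<Sigma> u w" "\<Sigma> \<noteq> {}" "\<forall>n\<ge>1. u n \<in> \<Sigma>"
    and "1 \<le> j" "int w < \<bar>i - int j\<bar>" "v (int j) = u j"
  shows "HmatZ L \<gamma> v i (int j) = 0"
proof -
  obtain s where "s \<in> \<Sigma>" using assms(2) by auto
  define ut where "ut = (\<lambda>n::int. if 1 \<le> n then u (nat n) else s)"
  have "\<forall>n. ut n \<in> \<Sigma>" "\<forall>n::nat. 1 \<le> n \<longrightarrow> ut (int n) = u n"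
    using assms(3) \<open>s \<in> \<Sigma>\<close> unfolding ut_def by auto
  with assms(1,5) have "HmatZ L \<gamma> ut i (int j) = 0"
    unfolding is_bandwidth_def by blast
  moreover have "ut (int j) = v (int j)"
    using assms(4,6) unfolding ut_def by simp
  ultimately show ?thesis
    unfolding HmatZ_def by (simp cong: if_cong)
qed

text \<open>The row \<open>i \<in> \<int>\<close> of \<open>L + S^\<gamma> M_u\<close> applied to \<open>x\<close> extended by zero to \<open>\<int>\<close>;
  the values of the extension \<open>u \<circ> nat\<close> off \<open>\<nat>\<close> never enter.\<close>
definition Hline :: "((int \<Rightarrow> complex) \<Rightarrow> (int \<Rightarrow> complex)) \<Rightarrow> int \<Rightarrow> (nat \<Rightarrow> complex) \<Rightarrow>
    (nat \<Rightarrow> complex) \<Rightarrow> int \<Rightarrow> complex" where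
  "Hline L \<gamma> u x i = infsum (\<lambda>j. HmatZ L \<gamma> (\<lambda>n. u (nat n)) i (int j) * x j) {1..}"

lemma Hplus_eq_half_axis_Hline: "Hplus L \<gamma> u x = half_axis (Hline L \<gamma> u x)"
  unfolding Hplus_def half_axis_def Hline_def Hmat_plus_def HmatZ_def nat_int ..

lemma Hline_eq_sum:
  assumes "finite A" "A \<subseteq> {1..}" "\<And>j. j \<notin> A \<Longrightarrow> x j = 0"
  shows "Hline L \<gamma> u x i = (\<Sum>j\<in>A. HmatZ L \<gamma> (\<lambda>n. u (nat n)) i (int j) * x j)"
  unfolding Hline_def
  by (subst infsum_eq_sum_if_zero_outside[OF assms(1,2)]) (use assms(3) in auto)

lemma sum_window_shift: "(\<Sum>j\<in>{a..<a + N}. f j) = (\<Sum>t<N. f (a + t))" for a N :: nat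
  using sum.atLeastLessThan_shift_0[of f a "a + N"] by (simp add: atLeast0LessThan comp_def)

lemma Hline_window_vanishes:
  assumes "is_bandwidth L \<gamma> \<Sigma> u w" "\<Sigma> \<noteq> {}" "\<forall>n\<ge>1. u n \<in> \<Sigma>"
    and "1 \<le> m" "\<forall>j. j \<notin> {m..<m + N} \<longrightarrow> x j = 0"
    and "i \<notin> {int m - int w..int (m + N) + int w}"
  shows "Hline L \<gamma> u x i = 0"
proof -
  have "Hline L \<gamma> u x i = (\<Sum>j\<in>{m..<m + N}. HmatZ L \<gamma> (\<lambda>n. u (nat n)) i (int j) * x j)"
    by (rule Hline_eq_sum) (use assms(4,5) in auto)
  also have "\<dots> = 0"
  proof (rule sum.neutral, rule ballI)
    fix j
    assume "j \<in> {m..<m + N}"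
    with assms(4,6) have "1 \<le> j" "int w < \<bar>i - int j\<bar>"
      by auto
    then show "HmatZ L \<gamma> (\<lambda>n. u (nat n)) i (int j) * x j = 0"
      using HmatZ_band[OF assms(1-3)] by simp
  qed
  finally show ?thesis .
qed

lemma Hline_window_translate:
  assumes shift: "\<forall>x. in_l2Z x \<longrightarrow> L (shiftZ x) = shiftZ (L x)"
    and "1 \<le> m" "1 \<le> k"
    and "\<forall>j. j \<notin> {m..<m + N} \<longrightarrow> x j = 0" "\<forall>j. j \<notin> {k..<k + N} \<longrightarrow> y j = 0"
    and match: "\<forall>t<N. y (k + t) = x (m + t) \<and> c (k + t) = b (m + t)"
  shows "Hline L \<gamma> c y i = Hline L \<gamma> b x (i + (int m - int k))"
proof -
  let ?d = "int m - int k"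
  have "Hline L \<gamma> c y i = (\<Sum>t<N. HmatZ L \<gamma> (\<lambda>n. c (nat n)) i (int (k + t)) * y (k + t))"
    by (subst Hline_eq_sum[of "{k..<k + N}"]) (use assms(3,5) in \<open>auto simp: sum_window_shift\<close>)
  also have "\<dots> = (\<Sum>t<N. HmatZ L \<gamma> (\<lambda>n. b (nat n)) (i + ?d) (int (m + t)) * x (m + t))"
  proof (rule sum.cong[OF refl])
    fix t
    assume "t \<in> {..<N}"
    then have "y (k + t) = x (m + t)" "c (k + t) = b (m + t)"
      using match by auto
    have column: "int (k + t) + ?d = int (m + t)"
      by simp
    have "HmatZ L \<gamma> (\<lambda>n. b (nat n)) (i + ?d) (int (m + t)) =
        HmatZ L \<gamma> (\<lambda>n. b (nat (n + ?d))) i (int (k + t))"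
      using HmatZ_translate[OF shift, of \<gamma> "\<lambda>n. b (nat n)" i ?d "int (k + t)"]
      unfolding column .
    also have "\<dots> = HmatZ L \<gamma> (\<lambda>n. c (nat n)) i (int (k + t))"
      unfolding HmatZ_def column nat_int using \<open>c (k + t) = b (m + t)\<close> by simp
    finally show "HmatZ L \<gamma> (\<lambda>n. c (nat n)) i (int (k + t)) * y (k + t) =
        HmatZ L \<gamma> (\<lambda>n. b (nat n)) (i + ?d) (int (m + t)) * x (m + t)"
      using \<open>y (k + t) = x (m + t)\<close> by simp
  qed
  also have "\<dots> = Hline L \<gamma> b x (i + ?d)"
    by (subst Hline_eq_sum[of "{m..<m + N}"]) (use assms(2,4) in \<open>auto simp: sum_window_shift\<close>)
  finally show ?thesis .
qed

lemma l2N_norm_window_translate: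
  assumes "1 \<le> m" "1 \<le> k"
    and "\<forall>j. j \<notin> {m..<m + N} \<longrightarrow> x j = 0" "\<forall>j. j \<notin> {k..<k + N} \<longrightarrow> y j = 0"
    and "\<forall>t<N. y (k + t) = x (m + t)"
  shows "l2N_norm y = l2N_norm x"
proof -
  have "l2N_norm y = sqrt (\<Sum>t<N. (cmod (y (k + t)))\<^sup>2)"
    by (subst l2N_norm_eq_sum[of "{k..<k + N}"]) (use assms(2,4) in \<open>auto simp: sum_window_shift\<close>)
  also have "\<dots> = sqrt (\<Sum>t<N. (cmod (x (m + t)))\<^sup>2)"
    using assms(5) by simp
  also have "\<dots> = l2N_norm x"
    by (subst l2N_norm_eq_sum[of "{m..<m + N}"]) (use assms(1,3) in \<open>auto simp: sum_window_shift\<close>)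
  finally show ?thesis .
qed

lemma supp_diam_lt_if_window:
  assumes "\<forall>j. j \<notin> {a..<a + N} \<longrightarrow> x j = 0"
  shows "supp_diam_lt x N"
proof -
  define S where "S = {j. x j \<noteq> 0}"
  have "S \<subseteq> {a..<a + N}"
    using assms unfolding S_def by auto
  then have "finite S"
    by (rule finite_subset) simp
  moreover have "Max S - Min S < N" if "S \<noteq> {}"
  proof -
    have "Max S \<in> S" "Min S \<in> S" "Min S \<le> Max S"
      using \<open>finite S\<close> that by auto
    moreover from \<open>S \<subseteq> {a..<a + N}\<close> \<open>Max S \<in> S\<close> \<open>Min S \<in> S\<close>
    have "a \<le> Min S" "Max S < a + N"
      by auto
    ultimately show ?thesis
      by arith
  qed
  ultimately show ?thesis
    unfolding supp_diam_lt_def Let_def S_def by blast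
qed

lemma window_if_supp_diam_lt:
  assumes "supp_diam_lt x N" "x j \<noteq> 0"
  obtains m where "x m \<noteq> 0" "\<forall>j. j \<notin> {m..<m + N} \<longrightarrow> x j = 0"
proof -
  define S where "S = {j. x j \<noteq> 0}"
  have "S \<noteq> {}"
    using assms(2) unfolding S_def by auto
  moreover have "finite S" "S \<noteq> {} \<longrightarrow> Max S - Min S < N"
    using assms(1) unfolding supp_diam_lt_def Let_def S_def by auto
  ultimately have "Min S \<in> S" "Max S - Min S < N" "\<forall>i\<in>S. Min S \<le> i \<and> i \<le> Max S"
    by auto
  then show ?thesis
    by (intro that[of "Min S"]) (auto simp: S_def)
qed

lemma unit_vector_in_test_vectors:
  assumes "1 \<le> N"
  shows "(\<lambda>j. if j = 1 then 1 else 0) \<in> test_vectors N"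
  unfolding test_vectors_def
proof (intro CollectI conjI)
  show "in_l2N (\<lambda>j. if j = 1 then 1 else 0)"
    by (rule in_l2N_if_finite_support[of "{1}"]) auto
  show "l2N_norm (\<lambda>j. if j = 1 then 1 else 0) = 1"
    by (subst l2N_norm_eq_sum[of "{1}"]) auto
  show "supp_diam_lt (\<lambda>j. if j = 1 then 1 else 0) N"
    by (rule supp_diam_lt_if_window[of 1]) (use assms in auto)
qed

lemma obtain_matching_window:
  assumes "1 \<le> m" "\<forall>n\<in>{1..w + N - 1}. b n = c n" "subwords N b \<subseteq> subwords N c"
  obtains k where "1 \<le> k" "\<forall>t<N. c (k + t) = b (m + t)" "k \<le> m \<or> w < m"
proof (cases "m \<le> w")
  case True
  with assms(1,2) show ?thesis
    by (intro that[of m]) auto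
next
  case False
  have "map (\<lambda>t. b (m + t)) [0..<N] \<in> subwords N b"
    using assms(1) unfolding subwords_def by auto
  with assms(3) have "map (\<lambda>t. b (m + t)) [0..<N] \<in> subwords N c"
    by blast
  then obtain k where "1 \<le> k" "map (\<lambda>t. b (m + t)) [0..<N] = map (\<lambda>t. c (k + t)) [0..<N]"
    unfolding subwords_def by auto
  then have "\<forall>t<N. c (k + t) = b (m + t)"
    by (metis map_eq_conv atLeastLessThan_iff set_upt zero_le)
  with \<open>1 \<le> k\<close> False show ?thesis
    by (intro that[of k]) auto
qed

lemma Hplus_window_translate_norm_le:
  assumes shift: "\<forall>x. in_l2Z x \<longrightarrow> L (shiftZ x) = shiftZ (L x)"
    and b_band: "is_bandwidth L \<gamma> \<Sigma> b w" and "\<Sigma> \<noteq> {}" "\<forall>n\<ge>1. b n \<in> \<Sigma>"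
    and "1 \<le> m" "1 \<le> k" "k \<le> m \<or> w < m"
    and x_window: "\<forall>j. j \<notin> {m..<m + N} \<longrightarrow> x j = 0"
    and y_window: "\<forall>j. j \<notin> {k..<k + N} \<longrightarrow> y j = 0"
    and match: "\<forall>t<N. y (k + t) = x (m + t) \<and> c (k + t) = b (m + t)"
  shows "l2N_norm (Hplus L \<gamma> c y) \<le> l2N_norm (Hplus L \<gamma> b x)"
proof -
  let ?g = "Hline L \<gamma> b x" and ?d = "int m - int k"
  have g_vanishes: "?g i = 0" if "i \<notin> {int m - int w..int (m + N) + int w}" for i
    using Hline_window_vanishes[OF b_band assms(3,4,5) x_window that] .
  have "finite {i. ?g i \<noteq> 0}"
    by (rule finite_subset[of _ "{int m - int w..int (m + N) + int w}"]) (use g_vanishes in blast, simp)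
  moreover have "0 \<le> ?d \<or> (\<forall>i\<le>0. ?g i = 0)"
    using \<open>k \<le> m \<or> w < m\<close> g_vanishes by auto
  ultimately have "l2N_norm (half_axis (\<lambda>i. ?g (i + ?d))) \<le> l2N_norm (half_axis ?g)"
    by (rule l2N_norm_half_axis_translate_le)
  moreover have "Hline L \<gamma> c y = (\<lambda>i. ?g (i + ?d))"
    using Hline_window_translate[OF shift \<open>1 \<le> m\<close> \<open>1 \<le> k\<close> x_window y_window match] by blast
  ultimately show ?thesis
    unfolding Hplus_eq_half_axis_Hline by simp
qed

lemma test_vector_transfer:
  assumes "\<Sigma> \<noteq> {}"
    and shift: "\<forall>x. in_l2Z x \<longrightarrow> L (shiftZ x) = shiftZ (L x)"
    and "\<forall>n\<ge>1. b n \<in> \<Sigma>" "is_bandwidth L \<gamma> \<Sigma> b w"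
    and bc: "\<forall>n\<in>{1..w + N - 1}. b n = c n"
    and sw: "subwords N b \<subseteq> subwords N c"
    and "x \<in> test_vectors N"
  shows "\<exists>y\<in>test_vectors N. l2N_norm (Hplus L \<gamma> c y) \<le> l2N_norm (Hplus L \<gamma> b x)"
proof -
  have x: "in_l2N x" "l2N_norm x = 1" "supp_diam_lt x N"
    using \<open>x \<in> test_vectors N\<close> unfolding test_vectors_def by auto
  have "\<exists>j. x j \<noteq> 0"
  proof (rule ccontr)
    assume "\<nexists>j. x j \<noteq> 0"
    then have "l2N_norm x = 0"
      unfolding l2N_norm_def by simp
    with x(2) show False
      by simp
  qed
  then obtain m where "x m \<noteq> 0" and x_window: "\<forall>j. j \<notin> {m..<m + N} \<longrightarrow> x j = 0"
    using window_if_supp_diam_lt[OF x(3)] by blast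
  moreover have "x 0 = 0"
    using x(1) unfolding in_l2N_def by simp
  ultimately have "1 \<le> m"
    by (cases m) auto
  obtain k where "1 \<le> k" and k_match: "\<forall>t<N. c (k + t) = b (m + t)" and "k \<le> m \<or> w < m"
    using obtain_matching_window[OF \<open>1 \<le> m\<close> bc sw] by blast
  define y where "y = (\<lambda>j. if k \<le> j \<and> j < k + N then x (j - k + m) else 0)"
  have y_window: "\<forall>j. j \<notin> {k..<k + N} \<longrightarrow> y j = 0"
    unfolding y_def by auto
  have match: "\<forall>t<N. y (k + t) = x (m + t) \<and> c (k + t) = b (m + t)"
    using k_match unfolding y_def by (simp add: add.commute)
  have "in_l2N y"
    by (rule in_l2N_if_finite_support[of "{k..<k + N}"]) (use \<open>1 \<le> k\<close> y_window in \<open>auto simp: y_def\<close>)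
  moreover have "l2N_norm y = 1"
    using l2N_norm_window_translate[OF \<open>1 \<le> m\<close> \<open>1 \<le> k\<close> x_window y_window] match x(2) by simp
  moreover have "supp_diam_lt y N"
    by (rule supp_diam_lt_if_window[OF y_window])
  moreover have "l2N_norm (Hplus L \<gamma> c y) \<le> l2N_norm (Hplus L \<gamma> b x)"
    by (rule Hplus_window_translate_norm_le)
      (use assms \<open>1 \<le> m\<close> \<open>1 \<le> k\<close> \<open>k \<le> m \<or> w < m\<close> x_window y_window match in auto)
  ultimately show ?thesis
    unfolding test_vectors_def by blast
qed

theorem proposition4p8:
  fixes \<Sigma> :: "complex set"
    and L :: "(int \<Rightarrow> complex) \<Rightarrow> (int \<Rightarrow> complex)"
    and \<gamma> :: int
    and b c :: "nat \<Rightarrow> complex"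
    and w N :: nat
  assumes "\<Sigma> \<noteq> {}" and "compact \<Sigma>"
    and "bounded_op_l2Z L" and "band_op L"
    and "\<forall>x. in_l2Z x \<longrightarrow> L (shiftZ x) = shiftZ (L x)"
    and "\<forall>n\<ge>1. b n \<in> \<Sigma>" and "\<forall>n\<ge>1. c n \<in> \<Sigma>"
    and "is_bandwidth L \<gamma> \<Sigma> b w" and "is_bandwidth L \<gamma> \<Sigma> c w"
    and "1 \<le> N"
    and "\<forall>n\<in>{1..w + N - 1}. b n = c n"
    and "subwords N b \<subseteq> subwords N c"
  shows "nu N (Hplus L \<gamma> b) \<ge> nu N (Hplus L \<gamma> c)"
  unfolding nu_eq_Inf_test_vectors
proof (rule cInf_mono)
  show "(\<lambda>x. l2N_norm (Hplus L \<gamma> b x)) ` test_vectors N \<noteq> {}"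
    using unit_vector_in_test_vectors[OF \<open>1 \<le> N\<close>] by blast
  show "bdd_below ((\<lambda>x. l2N_norm (Hplus L \<gamma> c x)) ` test_vectors N)"
    by (rule bdd_belowI[of _ 0]) (auto simp: l2N_norm_def intro!: infsum_nonneg)
next
  fix r
  assume "r \<in> (\<lambda>x. l2N_norm (Hplus L \<gamma> b x)) ` test_vectors N"
  then obtain x where "x \<in> test_vectors N" "r = l2N_norm (Hplus L \<gamma> b x)"
    by blast
  with test_vector_transfer[of \<Sigma> L b \<gamma> w N c x] assms
  show "\<exists>a\<in>(\<lambda>x. l2N_norm (Hplus L \<gamma> c x)) ` test_vectors N. a \<le> r"
    by auto
qed

end
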